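(* Let $S,T,V$ be ordered trees, let $w\in T$, and let $f\colon T^w\to S$ and $g\colon V\to T$ be rigid surjections. Let $i$ be the injection of $f$ and let $v\in S$. Then \[ f^v\circ g^{i(v)} = (f\circ g^w)^v. \]
   Context: A tree is a finite, non-empty partially ordered set $(T,\sqsubseteq_T)$ with a smallest element (the root) such that the set of predecessors of each element is linearly ordered; each node counts as its own predecessor and successor. $v\wedge_T w$ is the $\sqsubseteq_T$-largest common predecessor. A tree is ordered if the immediate successors of each node carry a fixed linear order; this induces the lexicographic linear order $\leq_T$: $v\leq_T w$ if $v\sqsubseteq_T w$, and for incomparable $v,w$, $v\leq_T w$ iff the immediate successor of $v\wedge_T w$ below $v$ precedes the one below $w$. A morphism $e\colon S\to T$ satisfies $e(v\wedge_S w)=e(v)\wedge_T e(w)$, is monotone from $\leq_S$ to $\leq_T$, and maps root to root. A function $f\colon T\to S$ is a rigid surjection if there is a morphism $e\colon S\to T$ with $f\circ e={\rm id}_S$ and $e(f(w))\sqsubseteq_T w$ for all $w$; this $e$ is unique and called the injection of $f$. For $v\in T$, $T^v=\{u\in T\mid u\leq_T v\}$, an ordered tree with inherited orders. For a rigid surjection $f\colon T\to S$ with injection $i$ and $v\in S$, $f^v=f\upharpoonright T^{i(v)}$; its image is $S^v$. *)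

theory Defs
  imports "HOL-Library.FuncSet"
begin

text \<open>An ordered tree: a carrier, the tree order (sqsubseteq), and a relation
  giving the linear order on the immediate successors of each node.\<close>
record 'a otree =
  carrier :: "'a set"
  tle :: "'a \<Rightarrow> 'a \<Rightarrow> bool"
  sle :: "'a \<Rightarrow> 'a \<Rightarrow> bool"

definition is_tree :: "'a otree \<Rightarrow> bool" where
  "is_tree T \<longleftrightarrow> finite (carrier T) \<and> carrier T \<noteq> {} \<and>
     (\<forall>x\<in>carrier T. tle T x x) \<and>
     (\<forall>x\<in>carrier T. \<forall>y\<in>carrier T. tle T x y \<and> tle T y x \<longrightarrow> x = y) \<and>
     (\<forall>x\<in>carrier T. \<forall>y\<in>carrier T. \<forall>z\<in>carrier T. tle T x y \<and> tle T y z \<longrightarrow> tle T x z) \<and>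
     (\<exists>r\<in>carrier T. \<forall>x\<in>carrier T. tle T r x) \<and>
     (\<forall>x\<in>carrier T. \<forall>y\<in>carrier T. \<forall>z\<in>carrier T.
        tle T y x \<and> tle T z x \<longrightarrow> tle T y z \<or> tle T z y)"

definition isucc :: "'a otree \<Rightarrow> 'a \<Rightarrow> 'a \<Rightarrow> bool" where
  "isucc T u x \<longleftrightarrow> u \<in> carrier T \<and> x \<in> carrier T \<and> tle T u x \<and> u \<noteq> x \<and>
     (\<forall>z\<in>carrier T. tle T u z \<and> tle T z x \<longrightarrow> z = u \<or> z = x)"

definition ordered_tree :: "'a otree \<Rightarrow> bool" where
  "ordered_tree T \<longleftrightarrow> is_tree T \<and>
     (\<forall>u\<in>carrier T.
        (\<forall>x. isucc T u x \<longrightarrow> sle T x x) \<and>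
        (\<forall>x y. isucc T u x \<and> isucc T u y \<and> sle T x y \<and> sle T y x \<longrightarrow> x = y) \<and>
        (\<forall>x y z. isucc T u x \<and> isucc T u y \<and> isucc T u z \<and> sle T x y \<and> sle T y z
                   \<longrightarrow> sle T x z) \<and>
        (\<forall>x y. isucc T u x \<and> isucc T u y \<longrightarrow> sle T x y \<or> sle T y x))"

definition root :: "'a otree \<Rightarrow> 'a" where
  "root T = (THE r. r \<in> carrier T \<and> (\<forall>x\<in>carrier T. tle T r x))"

definition meet :: "'a otree \<Rightarrow> 'a \<Rightarrow> 'a \<Rightarrow> 'a" where
  "meet T v w = (THE z. z \<in> carrier T \<and> tle T z v \<and> tle T z w \<and>
      (\<forall>z'\<in>carrier T. tle T z' v \<and> tle T z' w \<longrightarrow> tle T z' z))"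

definition lex :: "'a otree \<Rightarrow> 'a \<Rightarrow> 'a \<Rightarrow> bool" where
  "lex T v w \<longleftrightarrow> tle T v w \<or>
     (\<not> tle T v w \<and> \<not> tle T w v \<and>
      (\<exists>a b. isucc T (meet T v w) a \<and> isucc T (meet T v w) b \<and>
             tle T a v \<and> tle T b w \<and> sle T a b))"

definition morphism :: "'a otree \<Rightarrow> 'b otree \<Rightarrow> ('a \<Rightarrow> 'b) \<Rightarrow> bool" where
  "morphism S T e \<longleftrightarrow> e \<in> carrier S \<rightarrow> carrier T \<and>
     (\<forall>v\<in>carrier S. \<forall>w\<in>carrier S. e (meet S v w) = meet T (e v) (e w)) \<and>
     (\<forall>v\<in>carrier S. \<forall>w\<in>carrier S. lex S v w \<longrightarrow> lex T (e v) (e w)) \<and>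
     e (root S) = root T"

definition is_injection_of :: "'a otree \<Rightarrow> 'b otree \<Rightarrow> ('a \<Rightarrow> 'b) \<Rightarrow> ('b \<Rightarrow> 'a) \<Rightarrow> bool" where
  "is_injection_of T S f e \<longleftrightarrow> morphism S T e \<and> (\<forall>s\<in>carrier S. f (e s) = s) \<and>
     (\<forall>w\<in>carrier T. tle T (e (f w)) w)"

definition rigid_surj :: "'a otree \<Rightarrow> 'b otree \<Rightarrow> ('a \<Rightarrow> 'b) \<Rightarrow> bool" where
  "rigid_surj T S f \<longleftrightarrow> f \<in> carrier T \<rightarrow> carrier S \<and> (\<exists>e. is_injection_of T S f e)"

text \<open>The injection (unique on the carrier of S).\<close>
definition injection :: "'a otree \<Rightarrow> 'b otree \<Rightarrow> ('a \<Rightarrow> 'b) \<Rightarrow> 'b \<Rightarrow> 'a" where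
  "injection T S f = (SOME e. is_injection_of T S f e)"

definition subtree :: "'a otree \<Rightarrow> 'a \<Rightarrow> 'a otree" where
  "subtree T v = \<lparr>carrier = {u \<in> carrier T. lex T u v}, tle = tle T, sle = sle T\<rparr>"

text \<open>A map is represented as a pair (domain tree, function), the function
  being extensional (undefined outside the domain).\<close>
type_synonym ('a, 'b) tmap = "'a otree \<times> ('a \<Rightarrow> 'b)"

definition tmap :: "'a otree \<Rightarrow> ('a \<Rightarrow> 'b) \<Rightarrow> ('a, 'b) tmap" where
  "tmap T f = (T, restrict f (carrier T))"

definition tcomp :: "('b, 'c) tmap \<Rightarrow> ('a, 'b) tmap \<Rightarrow> ('a, 'c) tmap" where
  "tcomp F G = tmap (fst G) (snd F \<circ> snd G)"

text \<open>f^v = f restricted to T^{i(v)}, for a rigid surjection F = (T,f) onto S.\<close>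
definition tres :: "('a, 'b) tmap \<Rightarrow> 'b otree \<Rightarrow> 'b \<Rightarrow> ('a, 'b) tmap" where
  "tres F S v = tmap (subtree (fst F) (injection (fst F) S (snd F) v)) (snd F)"

end

theory Submission
  imports Defs
begin

text \<open>Write \<open>i\<close> and \<open>j\<close> for the injections of \<open>f\<close> and \<open>g\<close>. Since \<open>g\<close> is a
  rigid surjection, \<open>x \<le>\<^sub>V j t\<close> implies \<open>g x \<le>\<^sub>T t\<close> for the lexicographic orders, so \<open>g\<close>
  maps \<open>V\<^bsup>j t\<^esup>\<close> into \<open>T\<^bsup>t\<^esup>\<close>. Hence \<open>f \<circ> g\<^sup>w\<close> is a rigid surjection
  \<open>V\<^bsup>j w\<^esup> \<rightarrow> S\<close> whose injection is \<open>j \<circ> i\<close>, and both sides of the identity are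
  \<open>f \<circ> g\<close> restricted to \<open>V\<^bsup>j (i v)\<^esup>\<close>: on the left because \<open>(T\<^sup>w)\<^bsup>i v\<^esup> = T\<^bsup>i v\<^esup>\<close>, on the
  right because \<open>(V\<^bsup>j w\<^esup>)\<^bsup>j (i v)\<^esup> = V\<^bsup>j (i v)\<^esup>\<close>. Most of the work is showing that the
  lexicographic order of an ordered tree is a linear order.\<close>

section \<open>Linearity of the lexicographic order\<close>

lemma finite_total_has_greatest:
  assumes "finite P" "P \<noteq> {}" "\<And>x y. x\<in>P \<Longrightarrow> y\<in>P \<Longrightarrow> R x y \<or> R y x"
    "\<And>x y z. x\<in>P \<Longrightarrow> y\<in>P \<Longrightarrow> z\<in>P \<Longrightarrow> R x y \<Longrightarrow> R y z \<Longrightarrow> R x z"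
  shows "\<exists>m\<in>P. \<forall>x\<in>P. R x m"
  using assms
proof (induction P rule: finite_ne_induct)
  case (singleton x) then show ?case by blast
next
  case (insert x F)
  have "\<exists>m\<in>F. \<forall>y\<in>F. R y m"
    using insert.prems by (intro insert.IH) blast+
  then obtain m where m: "m \<in> F" "\<forall>y\<in>F. R y m" by blast
  have tot: "R x m \<or> R m x" using insert.prems(1)[of x m] m(1) by blast
  have xx: "R x x" using insert.prems(1)[of x x] by blast
  have tr: "\<And>y. y \<in> F \<Longrightarrow> R y m \<Longrightarrow> R m x \<Longrightarrow> R y x"
    using insert.prems(2) m(1) by blast
  show ?case
  proof (cases "R x m")
    case True then show ?thesis using m by auto
  next
    case False
    then have "R m x" using tot by simp
    then show ?thesis using m xx tr by auto
  qed
qed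

text \<open>The second disjunct of \<open>lex\<close>, with the meet replaced by an arbitrary branching
  node; this form composes well, which is what transitivity of \<open>lex\<close> needs.\<close>

definition branches :: "'a otree \<Rightarrow> 'a \<Rightarrow> 'a \<Rightarrow> bool" where
  "branches T v w \<longleftrightarrow>
     (\<exists>m a b. isucc T m a \<and> isucc T m b \<and> a \<noteq> b \<and> tle T a v \<and> tle T b w \<and> sle T a b)"

context
  fixes T :: "'a otree"
  assumes ord: "ordered_tree T"
begin

lemma tree_finite: "finite (carrier T)"
  using ord unfolding ordered_tree_def is_tree_def by blast

lemma tree_refl: "x \<in> carrier T \<Longrightarrow> tle T x x"
  using ord unfolding ordered_tree_def is_tree_def by blast

lemma tree_antisym: "\<lbrakk>x \<in> carrier T; y \<in> carrier T; tle T x y; tle T y x\<rbrakk> \<Longrightarrow> x = y"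
  using ord unfolding ordered_tree_def is_tree_def by blast

lemma tree_trans:
  "\<lbrakk>x \<in> carrier T; y \<in> carrier T; z \<in> carrier T; tle T x y; tle T y z\<rbrakk> \<Longrightarrow> tle T x z"
  using ord unfolding ordered_tree_def is_tree_def by blast

lemma tree_preds_linear:
  "\<lbrakk>x \<in> carrier T; y \<in> carrier T; z \<in> carrier T; tle T y x; tle T z x\<rbrakk> \<Longrightarrow> tle T y z \<or> tle T z y"
  using ord unfolding ordered_tree_def is_tree_def by blast

lemma root_least: "root T \<in> carrier T \<and> (\<forall>x\<in>carrier T. tle T (root T) x)"
proof -
  have "\<exists>r\<in>carrier T. \<forall>x\<in>carrier T. tle T r x"
    using ord unfolding ordered_tree_def is_tree_def by blast
  then obtain r where r: "r \<in> carrier T" "\<forall>x\<in>carrier T. tle T r x" by blast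
  have "root T = r" unfolding root_def
    by (rule the_equality) (use r tree_antisym in auto)
  then show ?thesis using r by simp
qed

lemma isuccD: "isucc T u x \<Longrightarrow> u \<in> carrier T \<and> x \<in> carrier T \<and> tle T u x \<and> u \<noteq> x"
  unfolding isucc_def by blast

lemma tle_imp_lex: "tle T v w \<Longrightarrow> lex T v w"
  by (simp add: lex_def)

lemma sle_refl: "isucc T u x \<Longrightarrow> sle T x x"
  using ord isuccD[of u x] unfolding ordered_tree_def by blast

lemma sle_antisym: "\<lbrakk>isucc T u x; isucc T u y; sle T x y; sle T y x\<rbrakk> \<Longrightarrow> x = y"
  using ord isuccD[of u x] unfolding ordered_tree_def by blast

lemma sle_trans:
  "\<lbrakk>isucc T u x; isucc T u y; isucc T u z; sle T x y; sle T y z\<rbrakk> \<Longrightarrow> sle T x z"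
  using ord isuccD[of u x] unfolding ordered_tree_def by blast

lemma sle_total: "\<lbrakk>isucc T u x; isucc T u y\<rbrakk> \<Longrightarrow> sle T x y \<or> sle T y x"
  using ord isuccD[of u x] unfolding ordered_tree_def by blast

lemma meet_eqI:
  assumes "m \<in> carrier T" "tle T m v" "tle T m w"
    "\<forall>z\<in>carrier T. tle T z v \<and> tle T z w \<longrightarrow> tle T z m"
  shows "meet T v w = m"
  unfolding meet_def by (rule the_equality) (use assms tree_antisym in blast)+

lemma meet_greatest:
  assumes "v \<in> carrier T" "w \<in> carrier T"
  shows "meet T v w \<in> carrier T \<and> tle T (meet T v w) v \<and> tle T (meet T v w) w \<and>
    (\<forall>z\<in>carrier T. tle T z v \<and> tle T z w \<longrightarrow> tle T z (meet T v w))"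
proof -
  let ?P = "{z\<in>carrier T. tle T z v \<and> tle T z w}"
  have "\<exists>m\<in>?P. \<forall>x\<in>?P. tle T x m"
  proof (rule finite_total_has_greatest)
    show "finite ?P" using tree_finite by simp
    show "?P \<noteq> {}" using assms root_least by blast
  qed (use tree_preds_linear[OF assms(1)] tree_trans in blast)+
  then obtain m where "m \<in> ?P" "\<forall>x\<in>?P. tle T x m" by blast
  moreover then have "meet T v w = m" by (intro meet_eqI) auto
  ultimately show ?thesis by auto
qed

lemma meet_commute: "v \<in> carrier T \<Longrightarrow> w \<in> carrier T \<Longrightarrow> meet T w v = meet T v w"
  using meet_greatest[of v w] by (intro meet_eqI) auto

lemma isucc_towards:
  assumes "m \<in> carrier T" "v \<in> carrier T" "tle T m v" "m \<noteq> v"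
  shows "\<exists>a. isucc T m a \<and> tle T a v"
proof -
  let ?P = "{y\<in>carrier T. tle T m y \<and> tle T y v \<and> y \<noteq> m}"
  have "\<exists>a\<in>?P. \<forall>x\<in>?P. tle T a x"
  proof (rule finite_total_has_greatest[where R = "\<lambda>x y. tle T y x"])
    show "finite ?P" using tree_finite by simp
    show "?P \<noteq> {}" using assms tree_refl[of v] by blast
  qed (use tree_preds_linear[OF assms(2)] tree_trans in blast)+
  then obtain a where a: "a \<in> ?P" "\<forall>x\<in>?P. tle T a x" by blast
  have aP: "a \<in> carrier T" "tle T m a" "tle T a v" "a \<noteq> m" using a(1) by auto
  have "\<forall>z\<in>carrier T. tle T m z \<and> tle T z a \<longrightarrow> z = m \<or> z = a"
  proof (intro ballI impI)
    fix z assume z: "z \<in> carrier T" "tle T m z \<and> tle T z a"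
    show "z = m \<or> z = a"
    proof (cases "z = m")
      case False
      have "tle T z v" using tree_trans[of z a v] z aP assms(2) by blast
      then have "z \<in> ?P" using z False by blast
      then have "tle T a z" using a(2) by blast
      then show ?thesis using tree_antisym[of z a] z aP by blast
    qed simp
  qed
  then have "isucc T m a" unfolding isucc_def using aP assms(1) by blast
  then show ?thesis using a by auto
qed

lemma isucc_unique:
  assumes "isucc T m a" "isucc T m b" "tle T a x" "tle T b x" "x \<in> carrier T"
  shows "a = b"
proof -
  have a: "a \<in> carrier T" "tle T m a" "a \<noteq> m" and b: "b \<in> carrier T" "tle T m b" "b \<noteq> m"
    using isuccD[OF assms(1)] isuccD[OF assms(2)] by auto
  from tree_preds_linear[OF assms(5) a(1) b(1) assms(3,4)] show ?thesis
  proof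
    assume "tle T a b" then show ?thesis using assms(2) a unfolding isucc_def by blast
  next
    assume "tle T b a" then show ?thesis using assms(1) b unfolding isucc_def by blast
  qed
qed

lemma isucc_distinct_meet:
  assumes "isucc T m a" "isucc T m b" "a \<noteq> b" "tle T a v" "tle T b w"
    "v \<in> carrier T" "w \<in> carrier T"
  shows "\<not> tle T v w \<and> \<not> tle T w v \<and> meet T v w = m"
proof -
  have c: "m \<in> carrier T" "a \<in> carrier T" "b \<in> carrier T" "tle T m a" "tle T m b" "m \<noteq> a"
    using isuccD[OF assms(1)] isuccD[OF assms(2)] by auto
  have naw: "\<not> tle T a w"
    using isucc_unique[of m a b w] assms by blast
  have nvw: "\<not> tle T v w"
    using tree_trans[of a v w] naw assms c by blast
  have nwv: "\<not> tle T w v"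
    using tree_trans[of b w v] isucc_unique[of m a b v] assms c by blast
  have "meet T v w = m"
  proof (rule meet_eqI)
    show "m \<in> carrier T" by (rule c)
    show "tle T m v" using tree_trans[of m a v] c assms by blast
    show "tle T m w" using tree_trans[of m b w] c assms by blast
    show "\<forall>z\<in>carrier T. tle T z v \<and> tle T z w \<longrightarrow> tle T z m"
    proof (intro ballI impI)
      fix z assume z: "z \<in> carrier T" "tle T z v \<and> tle T z w"
      have "tle T z a \<or> tle T a z" using tree_preds_linear[of v z a] z c assms by blast
      moreover have "\<not> tle T a z" using tree_trans[of a z w] z c assms naw by blast
      ultimately have za: "tle T z a" by blast
      have "tle T z m \<or> tle T m z" using tree_preds_linear[of a z m] z c za by blast
      moreover have "tle T m z \<Longrightarrow> z = m \<or> z = a"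
        using assms(1) z za unfolding isucc_def by blast
      ultimately show "tle T z m" using tree_refl[of m] c naw z by blast
    qed
  qed
  then show ?thesis using nvw nwv by blast
qed

lemma lex_iff_tle_or_branches:
  assumes "v \<in> carrier T" "w \<in> carrier T"
  shows "lex T v w \<longleftrightarrow> tle T v w \<or> branches T v w"
proof
  assume L: "lex T v w"
  show "tle T v w \<or> branches T v w"
  proof (cases "tle T v w")
    case False
    then obtain a b where ab: "isucc T (meet T v w) a" "isucc T (meet T v w) b"
      "tle T a v" "tle T b w" "sle T a b" using L unfolding lex_def by blast
    have "a \<noteq> b"
    proof
      assume "a = b"
      then have "tle T a (meet T v w)" using meet_greatest[OF assms] ab isuccD by blast
      then show False using ab(1) isuccD tree_antisym[of a "meet T v w"] by blast
    qed
    then show ?thesis using ab unfolding branches_def by blast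
  qed simp
next
  assume "tle T v w \<or> branches T v w"
  then show "lex T v w"
  proof
    assume "branches T v w"
    then obtain m a b where ab: "isucc T m a" "isucc T m b" "a \<noteq> b"
        "tle T a v" "tle T b w" "sle T a b"
      unfolding branches_def by blast
    have "\<not> tle T v w \<and> \<not> tle T w v \<and> meet T v w = m"
      using isucc_distinct_meet[OF ab(1-5) assms] .
    then show ?thesis unfolding lex_def using ab by blast
  qed (simp add: lex_def)
qed

lemma tle_branches_trans:
  assumes "x \<in> carrier T" "y \<in> carrier T" "z \<in> carrier T" "tle T x y" "branches T y z"
  shows "tle T x z \<or> branches T x z"
proof -
  obtain m a b where ab: "isucc T m a" "isucc T m b" "a \<noteq> b" "tle T a y" "tle T b z"
      "sle T a b"
    using assms(5) unfolding branches_def by blast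
  have c: "m \<in> carrier T" "a \<in> carrier T" "b \<in> carrier T" "tle T m a" "tle T m b"
    using ab(1,2) isuccD by blast+
  have mz: "tle T m z" using tree_trans[of m b z] c ab assms by blast
  have "tle T x a \<or> tle T a x" using tree_preds_linear[of y x a] assms c ab by blast
  then show ?thesis
  proof
    assume "tle T a x" then show ?thesis using ab unfolding branches_def by blast
  next
    assume xa: "tle T x a"
    have "tle T x m \<or> tle T m x" using tree_preds_linear[of a x m] assms c xa by blast
    moreover have "tle T m x \<Longrightarrow> x = m \<or> x = a"
      using ab(1) xa assms unfolding isucc_def by blast
    moreover have "tle T x m \<Longrightarrow> tle T x z" using tree_trans[of x m z] mz c assms by blast
    ultimately show ?thesis using mz ab tree_refl[of a] c unfolding branches_def by blast
  qed
qed

lemma branches_tle_trans: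
  assumes "x \<in> carrier T" "y \<in> carrier T" "z \<in> carrier T" "branches T x y" "tle T y z"
  shows "branches T x z"
proof -
  obtain m a b where ab: "isucc T m a" "isucc T m b" "a \<noteq> b" "tle T a x" "tle T b y" "sle T a b"
    using assms(4) unfolding branches_def by blast
  have "b \<in> carrier T" using ab(2) isuccD by blast
  then have "tle T b z" using tree_trans[of b y z] ab assms by blast
  then show ?thesis using ab unfolding branches_def by blast
qed

lemma isucc_least_above:
  assumes "isucc T m b" "tle T b y" "tle T x y" "tle T m x" "x \<noteq> m"
    "x \<in> carrier T" "y \<in> carrier T"
  shows "tle T b x"
proof -
  have "b \<in> carrier T" using isuccD[OF assms(1)] by blast
  then have "tle T x b \<or> tle T b x" using tree_preds_linear[OF assms(7,6) _ assms(3,2)] by blast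
  then show ?thesis using assms(1,4-6) tree_refl[of b] unfolding isucc_def by blast
qed

lemma branches_trans:
  assumes "x \<in> carrier T" "y \<in> carrier T" "z \<in> carrier T" "branches T x y" "branches T y z"
  shows "branches T x z"
proof -
  obtain m1 a1 b1 where ab1: "isucc T m1 a1" "isucc T m1 b1" "a1 \<noteq> b1"
      "tle T a1 x" "tle T b1 y" "sle T a1 b1"
    using assms(4) unfolding branches_def by blast
  obtain m2 a2 b2 where ab2: "isucc T m2 a2" "isucc T m2 b2" "a2 \<noteq> b2"
      "tle T a2 y" "tle T b2 z" "sle T a2 b2"
    using assms(5) unfolding branches_def by blast
  have c1: "m1 \<in> carrier T" "a1 \<in> carrier T" "b1 \<in> carrier T" "tle T m1 a1" "tle T m1 b1"
    using isuccD[OF ab1(1)] isuccD[OF ab1(2)] by auto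
  have c2: "m2 \<in> carrier T" "a2 \<in> carrier T" "b2 \<in> carrier T" "tle T m2 a2" "tle T m2 b2"
    using isuccD[OF ab2(1)] isuccD[OF ab2(2)] by auto
  have m1y: "tle T m1 y" using tree_trans[of m1 b1 y] c1 ab1 assms by blast
  have m2y: "tle T m2 y" using tree_trans[of m2 a2 y] c2 ab2 assms by blast
  consider "m1 = m2" | "tle T m1 m2" "m1 \<noteq> m2" | "tle T m2 m1" "m1 \<noteq> m2"
    using tree_preds_linear[OF assms(2) c1(1) c2(1) m1y m2y] by blast
  then show ?thesis
  proof cases
    case 1
    have ba: "b1 = a2" using isucc_unique[of m1 b1 a2 y] ab1 ab2 1 assms by blast
    have "sle T a1 b2" using sle_trans[of m1 a1 b1 b2] ab1 ab2 1 ba by blast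
    moreover have "a1 \<noteq> b2" using sle_antisym[of m1 a1 b1] ab1 ab2 ba by blast
    ultimately show ?thesis using ab1 ab2 1 unfolding branches_def by blast
  next
    case 2
    have "tle T b1 m2" using isucc_least_above[OF ab1(2,5) m2y 2(1) 2(2)[symmetric] c2(1) assms(2)] .
    then have "tle T b1 z" using tree_trans[of b1 m2 b2] tree_trans[of b1 b2 z] c1 c2 ab2 assms by blast
    then show ?thesis using ab1 unfolding branches_def by blast
  next
    case 3
    have "tle T a2 m1" using isucc_least_above[OF ab2(1,4) m1y 3 c1(1) assms(2)] .
    then have "tle T a2 x" using tree_trans[of a2 m1 a1] tree_trans[of a2 a1 x] c1 c2 ab1 assms by blast
    then show ?thesis using ab2 unfolding branches_def by blast
  qed
qed

lemma lex_trans: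
  assumes "x \<in> carrier T" "y \<in> carrier T" "z \<in> carrier T" "lex T x y" "lex T y z"
  shows "lex T x z"
proof -
  have "tle T x y \<or> branches T x y" "tle T y z \<or> branches T y z"
    using lex_iff_tle_or_branches assms by blast+
  then have "tle T x z \<or> branches T x z"
    using tree_trans[of x y z] tle_branches_trans[of x y z] branches_tle_trans[of x y z]
      branches_trans[of x y z] assms by blast
  then show ?thesis using lex_iff_tle_or_branches assms by blast
qed

lemma lex_antisym:
  assumes "v \<in> carrier T" "w \<in> carrier T" "lex T v w" "lex T w v"
  shows "v = w"
proof (rule ccontr)
  assume "v \<noteq> w"
  have incomparable: "\<not> tle T v w \<and> \<not> tle T w v" if "branches T v w \<or> branches T w v"
    using that isucc_distinct_meet assms(1,2) unfolding branches_def by blast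
  then have "branches T v w" "branches T w v"
    using lex_iff_tle_or_branches assms tree_antisym \<open>v \<noteq> w\<close> by blast+
  then obtain m1 a1 b1 m2 a2 b2 where
      ab1: "isucc T m1 a1" "isucc T m1 b1" "a1 \<noteq> b1" "tle T a1 v" "tle T b1 w" "sle T a1 b1" and
      ab2: "isucc T m2 a2" "isucc T m2 b2" "a2 \<noteq> b2" "tle T a2 w" "tle T b2 v" "sle T a2 b2"
    unfolding branches_def by blast
  have "m1 = meet T v w" "m2 = meet T w v"
    using isucc_distinct_meet[OF ab1(1-5) assms(1,2)] isucc_distinct_meet[OF ab2(1-5) assms(2,1)]
    by auto
  then have m: "m1 = m2" using meet_commute[OF assms(1,2)] by simp
  have "a1 = b2" using isucc_unique[of m1 a1 b2 v] ab1 ab2 m assms by blast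
  moreover have "b1 = a2" using isucc_unique[of m1 b1 a2 w] ab1 ab2 m assms by blast
  ultimately show False using sle_antisym[of m1 a1 b1] ab1 ab2 by blast
qed

lemma lex_total:
  assumes "v \<in> carrier T" "w \<in> carrier T"
  shows "lex T v w \<or> lex T w v"
proof (cases "tle T v w \<or> tle T w v")
  case True then show ?thesis using tle_imp_lex by blast
next
  case False
  let ?m = "meet T v w"
  have mp: "?m \<in> carrier T" "tle T ?m v" "tle T ?m w" "\<forall>z\<in>carrier T. tle T z v \<and> tle T z w \<longrightarrow> tle T z ?m"
    using meet_greatest[OF assms] by blast+
  have "?m \<noteq> v" "?m \<noteq> w" using mp False by auto
  then obtain a b where ab: "isucc T ?m a" "tle T a v" "isucc T ?m b" "tle T b w"
    using isucc_towards[of ?m v] isucc_towards[of ?m w] mp assms by blast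
  have "a \<noteq> b"
  proof
    assume "a = b"
    then have "tle T a ?m" using mp ab isuccD by blast
    then show False using ab(1) isuccD tree_antisym[of a ?m] by blast
  qed
  moreover have "sle T a b \<or> sle T b a" using sle_total ab by blast
  ultimately have "branches T v w \<or> branches T w v" using ab unfolding branches_def by blast
  then show ?thesis using lex_iff_tle_or_branches assms by blast
qed

end

section \<open>Subtrees\<close>

lemma subtree_simps [simp]:
  "carrier (subtree X z) = {u \<in> carrier X. lex X u z}"
  "tle (subtree X z) = tle X" "sle (subtree X z) = sle X"
  by (simp_all add: subtree_def)

context
  fixes X :: "'a otree" and z :: 'a
  assumes ord: "ordered_tree X" and zC: "z \<in> carrier X"
begin

lemma subtree_down_closed:
  "\<lbrakk>y \<in> carrier X; x \<in> carrier (subtree X z); tle X y x\<rbrakk> \<Longrightarrow> y \<in> carrier (subtree X z)"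
  using lex_trans[OF ord, of y x z] tle_imp_lex[OF ord, of y x] zC by simp

lemma subtree_isucc:
  assumes "x \<in> carrier (subtree X z)" "tle X q x"
  shows "isucc (subtree X z) p q \<longleftrightarrow> isucc X p q"
proof
  assume a: "isucc (subtree X z) p q"
  then have "p \<in> carrier X" "q \<in> carrier X" "tle X p q" "p \<noteq> q"
    "\<forall>z'\<in>carrier (subtree X z). tle X p z' \<and> tle X z' q \<longrightarrow> z' = p \<or> z' = q"
    unfolding isucc_def by auto
  moreover have "q \<in> carrier (subtree X z)" using a unfolding isucc_def by simp
  ultimately show "isucc X p q" unfolding isucc_def
    using subtree_down_closed[of _ q] by blast
next
  assume a: "isucc X p q"
  then have pq: "p \<in> carrier X" "q \<in> carrier X" "tle X p q" using isuccD[OF ord] by blast+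
  have q: "q \<in> carrier (subtree X z)" using subtree_down_closed[OF pq(2) assms(1,2)] .
  have p: "p \<in> carrier (subtree X z)" using subtree_down_closed[OF pq(1) q pq(3)] .
  show "isucc (subtree X z) p q" using a p q unfolding isucc_def by auto
qed

lemma root_in_subtree: "root X \<in> carrier (subtree X z)"
  using root_least[OF ord] tle_imp_lex[OF ord, of "root X" z] zC by simp

lemma ordered_tree_subtree: "ordered_tree (subtree X z)"
proof -
  have subD: "\<And>x. x \<in> carrier (subtree X z) \<Longrightarrow> x \<in> carrier X" by simp
  have isucc: "isucc X u x" if "isucc (subtree X z) u x" for u x
  proof -
    have "x \<in> carrier (subtree X z)" using that unfolding isucc_def by blast
    then show ?thesis using subtree_isucc[of x x u] tree_refl[OF ord] that by auto
  qed
  have "is_tree (subtree X z)"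
    unfolding is_tree_def subtree_simps(2)
  proof (intro conjI ballI impI)
    show "finite (carrier (subtree X z))"
      using finite_subset[OF _ tree_finite[OF ord]] subD by blast
    show "carrier (subtree X z) \<noteq> {}" using root_in_subtree by blast
    show "\<exists>r\<in>carrier (subtree X z). \<forall>x\<in>carrier (subtree X z). tle X r x"
      using root_in_subtree root_least[OF ord] subD by blast
  qed (use subD tree_refl[OF ord] tree_antisym[OF ord] tree_trans[OF ord]
        tree_preds_linear[OF ord] in meson)+
  moreover have "\<forall>u\<in>carrier (subtree X z).
        (\<forall>x. isucc (subtree X z) u x \<longrightarrow> sle X x x) \<and>
        (\<forall>x y. isucc (subtree X z) u x \<and> isucc (subtree X z) u y \<and> sle X x y \<and> sle X y x
           \<longrightarrow> x = y) \<and>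
        (\<forall>x y t. isucc (subtree X z) u x \<and> isucc (subtree X z) u y \<and> isucc (subtree X z) u t
           \<and> sle X x y \<and> sle X y t \<longrightarrow> sle X x t) \<and>
        (\<forall>x y. isucc (subtree X z) u x \<and> isucc (subtree X z) u y \<longrightarrow> sle X x y \<or> sle X y x)"
    by (intro ballI conjI allI impI; elim conjE isucc[elim_format])
      (use sle_refl[OF ord] sle_antisym[OF ord] sle_trans[OF ord] sle_total[OF ord] in blast)+
  ultimately show ?thesis unfolding ordered_tree_def subtree_simps(3) by blast
qed

lemma subtree_meet:
  assumes "x \<in> carrier (subtree X z)" "y \<in> carrier (subtree X z)"
  shows "meet (subtree X z) x y = meet X x y"
proof (rule meet_eqI[OF ordered_tree_subtree])
  have xy: "x \<in> carrier X" "y \<in> carrier X" using assms by auto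
  note m = meet_greatest[OF ord xy]
  show "meet X x y \<in> carrier (subtree X z)"
    using subtree_down_closed[of "meet X x y" x] m assms by blast
  show "tle (subtree X z) (meet X x y) x" "tle (subtree X z) (meet X x y) y"
    "\<forall>u\<in>carrier (subtree X z). tle (subtree X z) u x \<and> tle (subtree X z) u y
       \<longrightarrow> tle (subtree X z) u (meet X x y)"
    using m by auto
qed

lemma subtree_lex:
  assumes "x \<in> carrier (subtree X z)" "y \<in> carrier (subtree X z)"
  shows "lex (subtree X z) x y \<longleftrightarrow> lex X x y"
proof -
  have "\<And>a p. tle X a x \<Longrightarrow> isucc (subtree X z) p a \<longleftrightarrow> isucc X p a"
    and "\<And>a p. tle X a y \<Longrightarrow> isucc (subtree X z) p a \<longleftrightarrow> isucc X p a"
    using subtree_isucc[OF assms(1)] subtree_isucc[OF assms(2)] by blast+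
  then show ?thesis
    unfolding lex_def[of "subtree X z"] lex_def[of X] subtree_meet[OF assms] subtree_simps
    by blast
qed

lemma subtree_root: "root (subtree X z) = root X"
proof -
  have "root (subtree X z) \<in> carrier X" "tle X (root (subtree X z)) (root X)"
    using root_least[OF ordered_tree_subtree] root_in_subtree by auto
  then show ?thesis
    using root_least[OF ord] tree_antisym[OF ord] by blast
qed

lemma subtree_subtree:
  assumes "a \<in> carrier (subtree X z)"
  shows "subtree (subtree X z) a = subtree X a"
proof -
  have a: "a \<in> carrier X" "lex X a z" using assms by auto
  have "x \<in> carrier (subtree (subtree X z) a) \<longleftrightarrow> x \<in> carrier (subtree X a)" for x
  proof (cases "x \<in> carrier X \<and> lex X x a")
    case True
    then have "x \<in> carrier (subtree X z)" using lex_trans[OF ord _ a(1) zC _ a(2)] by auto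
    then show ?thesis using subtree_lex[OF _ assms] True by auto
  next
    case False
    then show ?thesis using subtree_lex[OF _ assms] by auto
  qed
  then show ?thesis unfolding subtree_def by auto
qed

lemma morphism_into_subtree_iff:
  assumes "e \<in> carrier S \<rightarrow> carrier (subtree X z)"
  shows "morphism S (subtree X z) e \<longleftrightarrow> morphism S X e"
proof -
  have eC: "\<And>v. v \<in> carrier S \<Longrightarrow> e v \<in> carrier (subtree X z)" using assms by blast
  have "e \<in> carrier S \<rightarrow> carrier X" using assms by auto
  moreover have "\<forall>v\<in>carrier S. \<forall>u\<in>carrier S. meet (subtree X z) (e v) (e u) = meet X (e v) (e u)"
    using subtree_meet[OF eC eC] by blast
  moreover have "\<forall>v\<in>carrier S. \<forall>u\<in>carrier S. lex (subtree X z) (e v) (e u) \<longleftrightarrow> lex X (e v) (e u)"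
    using subtree_lex[OF eC eC] by blast
  ultimately show ?thesis
    using assms unfolding morphism_def subtree_root by auto
qed

end

section \<open>Morphisms, injections and restrictions\<close>

lemma is_injection_of_restrict:
  "is_injection_of T S (restrict f (carrier T)) e \<longleftrightarrow> is_injection_of T S f e"
proof -
  have "e s \<in> carrier T" if "morphism S T e" "s \<in> carrier S" for s
    using that unfolding morphism_def by blast
  then show ?thesis unfolding is_injection_of_def by auto
qed

lemma injection_restrict: "injection T S (restrict f (carrier T)) = injection T S f"
  unfolding injection_def is_injection_of_restrict ..

lemma rigid_surj_injection:
  "rigid_surj T S f \<Longrightarrow> is_injection_of T S f (injection T S f)"
  unfolding rigid_surj_def injection_def by (metis someI_ex)

lemma injection_unique:
  assumes "ordered_tree T" "is_injection_of T S f e" "is_injection_of T S f e'" "s \<in> carrier S"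
  shows "e s = e' s"
proof -
  have e: "e s \<in> carrier T" "f (e s) = s" and e': "e' s \<in> carrier T" "f (e' s) = s"
    using assms(2-4) unfolding is_injection_of_def morphism_def by auto
  have "tle T (e' s) (e s)" "tle T (e s) (e' s)"
    using assms(2,3) e e' unfolding is_injection_of_def by metis+
  then show ?thesis using tree_antisym[OF assms(1)] e e' by blast
qed

lemma injection_eq:
  assumes "ordered_tree T" "is_injection_of T S f e" "s \<in> carrier S"
  shows "injection T S f s = e s"
  using injection_unique[OF assms(1) someI[of "is_injection_of T S f", OF assms(2)] assms(2,3)]
  unfolding injection_def .

lemma morphism_tle:
  assumes "ordered_tree S" "ordered_tree T" "morphism S T e" "a \<in> carrier S" "b \<in> carrier S" "tle S a b"
  shows "tle T (e a) (e b)"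
proof -
  have "meet S a b = a" using meet_eqI[OF assms(1), of a a b] assms tree_refl[OF assms(1)] by blast
  then have "e a = meet T (e a) (e b)" using assms(3-5) unfolding morphism_def by metis
  moreover have "e a \<in> carrier T" "e b \<in> carrier T" using assms(3-5) unfolding morphism_def by auto
  ultimately show ?thesis using meet_greatest[OF assms(2), of "e a" "e b"] by metis
qed

lemma morphism_comp:
  assumes "morphism S T e" "morphism T U e'"
  shows "morphism S U (e' \<circ> e)"
proof -
  have "e \<in> carrier S \<rightarrow> carrier T" using assms(1) unfolding morphism_def by blast
  then show ?thesis using assms unfolding morphism_def by (auto simp: Pi_iff)
qed

lemma lex_bound_through_injection:
  assumes oV: "ordered_tree V" and oT: "ordered_tree T" and jI: "is_injection_of V T g j"
    and gT: "g \<in> carrier V \<rightarrow> carrier T" and t: "t \<in> carrier T" and x: "x \<in> carrier V"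
    and L: "lex V x (j t)"
  shows "lex T (g x) t"
proof (rule ccontr)
  assume n: "\<not> lex T (g x) t"
  have gx: "g x \<in> carrier T" using gT x by blast
  have jm: "morphism T V j" "\<forall>s\<in>carrier T. g (j s) = s" "\<forall>w\<in>carrier V. tle V (j (g w)) w"
    using jI unfolding is_injection_of_def by blast+
  have jC: "j \<in> carrier T \<rightarrow> carrier V" using jm(1) unfolding morphism_def by blast
  have "lex T t (g x)" using lex_total[OF oT t gx] n by blast
  then have "lex V (j t) (j (g x))" using jm(1) t gx unfolding morphism_def by blast
  moreover have "lex V (j (g x)) x" using tle_imp_lex[OF oV] jm(3) x by blast
  ultimately have "lex V (j t) x" using lex_trans[OF oV, of "j t" "j (g x)" x] jC t gx x by blast
  then have "x = j t" using lex_antisym[OF oV] L x jC t by blast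
  then have "g x = t" using jm(2) t by simp
  then show False using n tle_imp_lex[OF oT] tree_refl[OF oT] t by blast
qed

lemma rigid_surj_maps_subtree:
  assumes "ordered_tree V" "ordered_tree T" "is_injection_of V T g j"
    "g \<in> carrier V \<rightarrow> carrier T" "t \<in> carrier T"
  shows "g \<in> carrier (subtree V (j t)) \<rightarrow> carrier (subtree T t)"
  using lex_bound_through_injection[OF assms] assms(4) by auto

lemma is_injection_of_comp:
  assumes oT: "ordered_tree T" and oV: "ordered_tree V" and wC: "w \<in> carrier T"
    and iI: "is_injection_of (subtree T w) S f i" and jI: "is_injection_of V T g j"
    and fS: "f \<in> carrier (subtree T w) \<rightarrow> carrier S" and gT: "g \<in> carrier V \<rightarrow> carrier T"
  shows "is_injection_of (subtree V (j w)) S (f \<circ> g) (j \<circ> i)"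
proof -
  have im: "morphism S (subtree T w) i" "\<forall>s\<in>carrier S. f (i s) = s"
    "\<forall>x\<in>carrier (subtree T w). tle T (i (f x)) x"
    using iI unfolding is_injection_of_def by auto
  have jm: "morphism T V j" "\<forall>s\<in>carrier T. g (j s) = s" "\<forall>x\<in>carrier V. tle V (j (g x)) x"
    using jI unfolding is_injection_of_def by auto
  have iC: "i \<in> carrier S \<rightarrow> carrier (subtree T w)" using im(1) unfolding morphism_def by blast
  have jC: "j \<in> carrier T \<rightarrow> carrier V" using jm(1) unfolding morphism_def by blast
  have jwC: "j w \<in> carrier V" using jC wC by blast
  have jiC: "j \<circ> i \<in> carrier S \<rightarrow> carrier (subtree V (j w))"
    using iC jC jm(1) wC unfolding morphism_def by (auto simp: Pi_iff)
  have "morphism S T i" using im(1) morphism_into_subtree_iff[OF oT wC iC] by blast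
  then have "morphism S V (j \<circ> i)" using morphism_comp jm(1) by blast
  then have mor: "morphism S (subtree V (j w)) (j \<circ> i)"
    using morphism_into_subtree_iff[OF oV jwC jiC] by blast
  have inv: "\<forall>s\<in>carrier S. (f \<circ> g) ((j \<circ> i) s) = s"
  proof
    fix s assume "s \<in> carrier S"
    then have "i s \<in> carrier T" using iC by auto
    then show "(f \<circ> g) ((j \<circ> i) s) = s" using im(2) jm(2) \<open>s \<in> carrier S\<close> by simp
  qed
  have below: "tle (subtree V (j w)) ((j \<circ> i) ((f \<circ> g) x)) x"
    if x: "x \<in> carrier (subtree V (j w))" for x
  proof -
    have xV: "x \<in> carrier V" using x by simp
    have gx: "g x \<in> carrier (subtree T w)"
      using rigid_surj_maps_subtree[OF oV oT jI gT wC] x by blast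
    then have gxT: "g x \<in> carrier T" by simp
    have fgx: "f (g x) \<in> carrier S" using fS gx by blast
    then have ifgx: "i (f (g x)) \<in> carrier T" using iC by auto
    have "tle T (i (f (g x))) (g x)" using im(3) gx by blast
    then have "tle V (j (i (f (g x)))) (j (g x))"
      using morphism_tle[OF oT oV jm(1) ifgx gxT] by blast
    moreover have "tle V (j (g x)) x" using jm(3) xV by blast
    moreover have "j (i (f (g x))) \<in> carrier V" "j (g x) \<in> carrier V" using jC ifgx gxT by auto
    ultimately have "tle V (j (i (f (g x)))) x" using tree_trans[OF oV _ _ xV] by blast
    then show ?thesis by simp
  qed
  show ?thesis unfolding is_injection_of_def using mor inv below by blast
qed

lemma tres_tmap: "tres (tmap T f) S v = tmap (subtree T (injection T S f v)) f"
proof -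
  have "restrict (restrict f (carrier T)) (carrier (subtree T u)) = restrict f (carrier (subtree T u))"
    for u by (auto simp: restrict_def)
  then show ?thesis unfolding tres_def tmap_def fst_conv snd_conv injection_restrict by simp
qed

lemma tcomp_tmap:
  assumes "g \<in> carrier U \<rightarrow> carrier T"
  shows "tcomp (tmap T f) (tmap U g) = tmap U (f \<circ> g)"
  using assms unfolding tcomp_def tmap_def by (auto simp: restrict_def fun_eq_iff Pi_iff)

theorem lemma4p4:
  fixes S :: "'c otree" and T :: "'b otree" and V :: "'a otree"
    and f :: "'b \<Rightarrow> 'c" and g :: "'a \<Rightarrow> 'b" and w :: 'b and v :: 'c
  assumes "ordered_tree S" and "ordered_tree T" and "ordered_tree V"
    and "w \<in> carrier T"
    and "rigid_surj (subtree T w) S f"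
    and "rigid_surj V T g"
    and "v \<in> carrier S"
  shows "tcomp (tres (tmap (subtree T w) f) S v)
               (tres (tmap V g) T (injection (subtree T w) S f v))
       = tres (tcomp (tmap (subtree T w) f) (tres (tmap V g) T w)) S v"
proof -
  define i where "i = injection (subtree T w) S f"
  define j where "j = injection V T g"
  have fS: "f \<in> carrier (subtree T w) \<rightarrow> carrier S" and iI: "is_injection_of (subtree T w) S f i"
    using assms(5) rigid_surj_injection unfolding rigid_surj_def i_def by blast+
  have gT: "g \<in> carrier V \<rightarrow> carrier T" and jI: "is_injection_of V T g j"
    using assms(6) rigid_surj_injection unfolding rigid_surj_def j_def by blast+
  have jiI: "is_injection_of (subtree V (j w)) S (f \<circ> g) (j \<circ> i)"
    using is_injection_of_comp[OF assms(2-4) iI jI fS gT] .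
  have iv: "i v \<in> carrier (subtree T w)" and jiv: "j (i v) \<in> carrier (subtree V (j w))"
    using iI jiI assms(7) unfolding is_injection_of_def morphism_def by auto
  have jw: "j w \<in> carrier V" using jI assms(4) unfolding is_injection_of_def morphism_def by auto
  have "tcomp (tres (tmap (subtree T w) f) S v) (tres (tmap V g) T (i v))
      = tcomp (tmap (subtree T (i v)) f) (tmap (subtree V (j (i v))) g)"
    unfolding tres_tmap i_def[symmetric] j_def[symmetric] subtree_subtree[OF assms(2,4) iv] ..
  also have "\<dots> = tmap (subtree V (j (i v))) (f \<circ> g)"
    using iv by (intro tcomp_tmap rigid_surj_maps_subtree[OF assms(3,2) jI gT]) simp
  also have "\<dots> = tres (tmap (subtree V (j w)) (f \<circ> g)) S v"
    unfolding tres_tmap injection_eq[OF ordered_tree_subtree[OF assms(3) jw] jiI assms(7)]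
    using subtree_subtree[OF assms(3) jw jiv] by simp
  also have "\<dots> = tres (tcomp (tmap (subtree T w) f) (tres (tmap V g) T w)) S v"
    unfolding tres_tmap j_def[symmetric]
      tcomp_tmap[OF rigid_surj_maps_subtree[OF assms(3,2) jI gT assms(4)]] ..
  finally show ?thesis unfolding i_def .
qed

end
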